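(* Let $(Q,\mathcal M)$ be a modulated quiver with $\mathcal M$ v-uniform, $I$ an admissible ideal of $T(Q,\mathcal M)$, $\Psi$ a complexification isomorphism, $J=\Psi(\mathbf e(I\otimes_{\mathbb R}\mathbb C)\mathbf e)$, and $p$ a path of $Q$. (1) If $\mathcal M$ is v-uniform with $\mathbb R$ or with $\mathbb H$, then $\Gamma=Q$, the path $p$ of $\Gamma$ is the only fiber of $p$, and $p\in R_I$ if and only if $p\in J$. (2) If $\mathcal M$ is v-uniform with $\mathbb C$, then $p$ has exactly two fibers $p',p''$ in $\Gamma$, and $p\in R_I\iff p'\in J\iff p''\in J$.
   Context: Quivers $Q=(Q_0,Q_1,s,t)$ are finite; an arrow $\alpha$ goes from $s(\alpha)$ to $t(\alpha)$. Paths are written from right to left: a path of length $n\ge1$ is $p=\alpha_n\cdots\alpha_1$ with $t(\alpha_k)=s(\alpha_{k+1})$; each vertex $i$ has a trivial path $e_i$. For a division ring $D$, $DQ$ denotes the path algebra of $Q$ over $D$ (free left $D$-module on the paths, scalars commuting with paths, multiplication by concatenation). Let $\mathbb H=\{\begin{bmatrix}a&b\\-\bar b&\bar a\end{bmatrix}:a,b\in\mathbb C\}\subset M_2(\mathbb C)$ be the real quaternions. A modulation $\mathcal M$ of $Q$ assigns to each vertex $i$ a division ring $\mathcal M(i)\in\{\mathbb R,\mathbb C,\mathbb H\}$ and to each arrow $\alpha$ a simple $\mathcal M(t(\alpha))$-$\mathcal M(s(\alpha))$-bimodule $\mathcal M(\alpha)$ on which $\mathbb R$ acts centrally; $(Q,\mathcal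 M)$ is a modulated quiver. Up to isomorphism there is exactly one such simple bimodule for each pair of these division rings other than $(\mathbb C,\mathbb C)$, and for $(\mathbb C,\mathbb C)$ there are exactly two: $\mathbb C$ with action $a\cdot z\cdot b=azb$, and $\overline{\mathbb C}$, which is $\mathbb C$ as a set with action $a\cdot z\cdot b=az\bar b$. For a path $p=\alpha_n\cdots\alpha_1$ put $\mathcal M(p)=\mathcal M(\alpha_n)\otimes_{\mathcal M(s(\alpha_n))}\cdots\otimes_{\mathcal M(s(\alpha_2))}\mathcal M(\alpha_1)$, and $\mathcal M(e_i)=\mathcal M(i)$. The tensor algebra is $T(Q,\mathcal M)=\prod_{i\in Q_0}\mathcal M(i)\oplus\bigoplus_{p}\mathcal M(p)$ (sum over paths of length $\ge1$). An ideal $I$ of $T(Q,\mathcal M)$ is admissible if $A^m\subseteq I\subseteq A^2$ for some $m\ge2$, where $A$ is the ideal generated by $\bigoplus_{\alpha\in Q_1}\mathcal M(\alpha)$. $\mathcal M$ is v-uniform with $D\in\{\mathbb R,\mathbb C,\mathbb H\}$ if $\mathcal M(i)=D$ for all $i\in Q_0$. Then every $\mathcal M(\alpha)$ has underlying set $D$, and for a path $p$ we write $1_{\mathcal M(p)}=1\otimes\cdots\otimes1\in\mathcal M(p)$ ($1_{\mathcal M(e_i)}$ being the identity of $\mathcal M(i)$). For an ideal $I$ of $T(Q,\mathcal M)$ put $R_I=\{\sum_k d_kp_k\in DQ:\ \sum_k d_k1_{\mathcal M(p_k)}\in I\}$, an ideal of $DQ$. The quiver $\Gamma$ of $(Q,\mathcal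 M)$: each $i\in Q_0$ with $\mathcal M(i)\in\{\mathbb R,\mathbb H\}$ gives one vertex $i$ of $\Gamma$; each $i$ with $\mathcal M(i)=\mathbb C$ gives two vertices $i,\bar i$. Each arrow $\alpha:i\to j$ of $Q$ gives arrows of $\Gamma$ as follows: if $\mathcal M(i)=\mathcal M(j)\in\{\mathbb R,\mathbb H\}$, one arrow $\alpha:i\to j$; if $\mathcal M(i)=\mathbb C$ and $\mathcal M(j)\in\{\mathbb R,\mathbb H\}$, arrows $\alpha:i\to j$, $\bar\alpha:\bar i\to j$; if $\mathcal M(i)\in\{\mathbb R,\mathbb H\}$ and $\mathcal M(j)=\mathbb C$, arrows $\alpha:i\to j$, $\bar\alpha:i\to\bar j$; if $\{\mathcal M(i),\mathcal M(j)\}=\{\mathbb R,\mathbb H\}$, two arrows $\alpha,\bar\alpha:i\to j$; if $\mathcal M(i)=\mathcal M(j)=\mathbb C$ and $\mathcal M(\alpha)=\mathbb C$, arrows $\alpha:i\to j$, $\bar\alpha:\bar i\to\bar j$; if $\mathcal M(i)=\mathcal M(j)=\mathbb C$ and $\mathcal M(\alpha)=\overline{\mathbb C}$, arrows $\alpha:\bar i\to j$, $\bar\alpha:i\to\bar j$. The map $\pi:\Gamma\to Q$ sends $i,\bar i\mapsto i$ and $\alpha,\bar\alpha\mapsto\alpha$. A vertex or arrow $x$ of $\Gamma$ is a fiber of $\pi(x)$; a path $\beta_n\cdots\beta_1$ of $\Gamma$ is a fiber of the path $\pi(\beta_n)\cdots\pi(\beta_1)$ of $Q$, and the fibers of a trivial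 path $e_i$ are the trivial paths $e_{i'}$ with $i'$ a fiber of $i$. Identify $\mathbb R\otimes_{\mathbb R}\mathbb C=\mathbb C$, $\mathbb H\otimes_{\mathbb R}\mathbb C\cong M_2(\mathbb C)$ via $h\otimes c\mapsto ch$, and $\mathbb C\otimes_{\mathbb R}\mathbb C\cong\mathbb C\times\mathbb C$ via $a\otimes b\mapsto(ab,\bar ab)$. Let $\mathbf e=(\epsilon_i)_{i\in Q_0}\in\prod_i\mathcal M(i)\otimes_{\mathbb R}\mathbb C\subseteq T(Q,\mathcal M)\otimes_{\mathbb R}\mathbb C$, where $\epsilon_i=1$ if $\mathcal M(i)\in\{\mathbb R,\mathbb C\}$ and $\epsilon_i$ corresponds to the matrix unit $\begin{bmatrix}1&0\\0&0\end{bmatrix}$ if $\mathcal M(i)=\mathbb H$. A complexification isomorphism for $(Q,\mathcal M)$ is a $\mathbb C$-algebra isomorphism $\Psi:\mathbf e(T(Q,\mathcal M)\otimes_{\mathbb R}\mathbb C)\mathbf e\to\mathbb C\Gamma$ such that for every path $p$ of $Q$ (trivial or not), $\Psi(\mathbf e(\mathcal M(p)\otimes_{\mathbb R}\mathbb C)\mathbf e)=\bigoplus_q\mathbb Cq$, the sum over all fibers $q$ of $p$ in $\Gamma$; such isomorphisms exist. *)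

theory Defs
  imports Complex_Main
begin

text \<open>Quat a b represents the complex 2x2 matrix [[a, b], [-cnj b, cnj a]].\<close>

datatype quat = Quat complex complex

fun qa :: "quat \<Rightarrow> complex" where "qa (Quat a b) = a"
fun qb :: "quat \<Rightarrow> complex" where "qb (Quat a b) = b"

lemma quat_eq_iff: "x = y \<longleftrightarrow> qa x = qa y \<and> qb x = qb y"
  by (cases x; cases y) auto

instantiation quat :: "{real_vector, times, one}"
begin
definition "0 = Quat 0 0"
definition "1 = Quat 1 0"
definition "x + y = Quat (qa x + qa y) (qb x + qb y)"
definition "- x = Quat (- qa x) (- qb x)"
definition "x - y = Quat (qa x - qa y) (qb x - qb y)"
definition "x * y = Quat (qa x * qa y - qb x * cnj (qb y)) (qa x * qb y + qb x * cnj (qa y))"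
definition "scaleR r x = Quat (scaleR r (qa x)) (scaleR r (qb x))"
instance
  by standard (auto simp: quat_eq_iff zero_quat_def plus_quat_def uminus_quat_def
      minus_quat_def scaleR_quat_def algebra_simps)
end

definition quat_i :: quat where "quat_i = Quat \<i> 0"

record ('v,'a) quiver =
  verts :: "'v set"
  arrs :: "'a set"
  src :: "'a \<Rightarrow> 'v"
  tgt :: "'a \<Rightarrow> 'v"

definition finite_quiver :: "('v,'a) quiver \<Rightarrow> bool" where
  "finite_quiver Q \<longleftrightarrow> finite (verts Q) \<and> finite (arrs Q) \<and>
     (\<forall>\<alpha>\<in>arrs Q. src Q \<alpha> \<in> verts Q \<and> tgt Q \<alpha> \<in> verts Q)"

text \<open>A path is a pair (v, [a1,...,an]) standing for the path an...a1 starting at v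
  (with s(a1) = v); (v, []) is the trivial path e_v.\<close>
type_synonym ('v,'a) path = "'v \<times> 'a list"

definition is_path :: "('v,'a) quiver \<Rightarrow> ('v,'a) path \<Rightarrow> bool" where
  "is_path Q p \<longleftrightarrow> fst p \<in> verts Q \<and> set (snd p) \<subseteq> arrs Q \<and>
     (snd p \<noteq> [] \<longrightarrow> src Q (hd (snd p)) = fst p) \<and>
     (\<forall>k. Suc k < length (snd p) \<longrightarrow> tgt Q (snd p ! k) = src Q (snd p ! Suc k))"

definition psrc :: "('v,'a) path \<Rightarrow> 'v" where "psrc p = fst p"

definition ptgt :: "('v,'a) quiver \<Rightarrow> ('v,'a) path \<Rightarrow> 'v" where
  "ptgt Q p = (if snd p = [] then fst p else tgt Q (last (snd p)))"

text \<open>pcomp q p is the concatenation q p (first p, then q); meaningful if ptgt p = psrc q.\<close>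
definition pcomp :: "('v,'a) path \<Rightarrow> ('v,'a) path \<Rightarrow> ('v,'a) path" where
  "pcomp q p = (fst p, snd p @ snd q)"

text \<open>For a v-uniform modulation with division ring D, every M(p) is free of rank one as a
  left D-module on 1_{M(p)}, and 1_{M(alpha)} b = tw alpha b 1_{M(alpha)}, where the twist tw alpha
  is the identity except for the bimodule conj(C), where it is complex conjugation.
  Hence an element of T(Q,M) is a finitely supported function from paths to D,
  sum d_p 1_{M(p)}, and 1_{M(q)} b 1_{M(p)} = tw_q(b) 1_{M(qp)}.
  With tw = identity this is exactly the path algebra DQ.\<close>

definition supp :: "('p \<Rightarrow> 'd::zero) \<Rightarrow> 'p set" where
  "supp f = {p. f p \<noteq> 0}"

definition alg_carrier :: "('v,'a) quiver \<Rightarrow> (('v,'a) path \<Rightarrow> 'd::zero) set" where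
  "alg_carrier Q = {f. finite (supp f) \<and> (\<forall>p. f p \<noteq> 0 \<longrightarrow> is_path Q p)}"

fun path_twist :: "('a \<Rightarrow> 'd \<Rightarrow> 'd) \<Rightarrow> 'a list \<Rightarrow> 'd \<Rightarrow> 'd" where
  "path_twist tw [] = id"
| "path_twist tw (\<alpha> # as) = path_twist tw as \<circ> tw \<alpha>"

definition tmul :: "('v,'a) quiver \<Rightarrow> ('a \<Rightarrow> 'd \<Rightarrow> 'd) \<Rightarrow>
    (('v,'a) path \<Rightarrow> 'd::{comm_monoid_add,times}) \<Rightarrow> (('v,'a) path \<Rightarrow> 'd) \<Rightarrow> (('v,'a) path \<Rightarrow> 'd)" where
  "tmul Q tw f g = (\<lambda>r. \<Sum>q\<in>supp f. \<Sum>p\<in>supp g.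
      if ptgt Q p = psrc q \<and> pcomp q p = r then f q * path_twist tw (snd q) (g p) else 0)"

definition tadd :: "('p \<Rightarrow> 'd::plus) \<Rightarrow> ('p \<Rightarrow> 'd) \<Rightarrow> ('p \<Rightarrow> 'd)" where
  "tadd f g = (\<lambda>r. f r + g r)"

definition tzero :: "'p \<Rightarrow> 'd::zero" where "tzero = (\<lambda>_. 0)"

definition tone :: "('v,'a) quiver \<Rightarrow> ('v,'a) path \<Rightarrow> 'd::{zero,one}" where
  "tone Q = (\<lambda>p. if snd p = [] \<and> fst p \<in> verts Q then 1 else 0)"

text \<open>delta p d is the element d 1_{M(p)} (resp. the element d p of DQ).\<close>
definition delta :: "('v,'a) path \<Rightarrow> 'd::zero \<Rightarrow> ('v,'a) path \<Rightarrow> 'd" where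
  "delta p d = (\<lambda>r. if r = p then d else 0)"

definition is_ideal :: "('v,'a) quiver \<Rightarrow> ('a \<Rightarrow> 'd \<Rightarrow> 'd) \<Rightarrow>
    (('v,'a) path \<Rightarrow> 'd::{ab_group_add,times}) set \<Rightarrow> bool" where
  "is_ideal Q tw I \<longleftrightarrow> I \<subseteq> alg_carrier Q \<and> tzero \<in> I \<and>
     (\<forall>x\<in>I. \<forall>y\<in>I. tadd x y \<in> I) \<and> (\<forall>x\<in>I. (\<lambda>r. - x r) \<in> I) \<and>
     (\<forall>x\<in>I. \<forall>a\<in>alg_carrier Q. tmul Q tw a x \<in> I \<and> tmul Q tw x a \<in> I)"

definition ideal_gen :: "('v,'a) quiver \<Rightarrow> ('a \<Rightarrow> 'd \<Rightarrow> 'd) \<Rightarrow>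
    (('v,'a) path \<Rightarrow> 'd::{ab_group_add,times}) set \<Rightarrow> (('v,'a) path \<Rightarrow> 'd) set" where
  "ideal_gen Q tw S = \<Inter> {I. is_ideal Q tw I \<and> S \<subseteq> I}"

definition arrow_ideal :: "('v,'a) quiver \<Rightarrow> ('a \<Rightarrow> 'd \<Rightarrow> 'd) \<Rightarrow>
    (('v,'a) path \<Rightarrow> 'd::{ab_group_add,times}) set" where
  "arrow_ideal Q tw = ideal_gen Q tw {delta (src Q \<alpha>, [\<alpha>]) d | \<alpha> d. \<alpha> \<in> arrs Q}"

primrec ideal_pow :: "('v,'a) quiver \<Rightarrow> ('a \<Rightarrow> 'd \<Rightarrow> 'd) \<Rightarrow>
    (('v,'a) path \<Rightarrow> 'd::{ab_group_add,times}) set \<Rightarrow> nat \<Rightarrow> (('v,'a) path \<Rightarrow> 'd) set" where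
  "ideal_pow Q tw A 0 = alg_carrier Q"
| "ideal_pow Q tw A (Suc n) = ideal_gen Q tw {tmul Q tw x y | x y. x \<in> ideal_pow Q tw A n \<and> y \<in> A}"

definition admissible :: "('v,'a) quiver \<Rightarrow> ('a \<Rightarrow> 'd \<Rightarrow> 'd) \<Rightarrow>
    (('v,'a) path \<Rightarrow> 'd::{ab_group_add,times}) set \<Rightarrow> bool" where
  "admissible Q tw I \<longleftrightarrow> is_ideal Q tw I \<and>
     (\<exists>m\<ge>2. ideal_pow Q tw (arrow_ideal Q tw) m \<subseteq> I \<and> I \<subseteq> ideal_pow Q tw (arrow_ideal Q tw) 2)"

text \<open>R_I: the elements sum d_k p_k of DQ with sum d_k 1_{M(p_k)} in I. Both DQ and
  T(Q,M) are modelled on the same finitely supported functions, p corresponding to 1_{M(p)}.\<close>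
definition R_ideal :: "('v,'a) quiver \<Rightarrow> (('v,'a) path \<Rightarrow> 'd::zero) set \<Rightarrow> (('v,'a) path \<Rightarrow> 'd) set" where
  "R_ideal Q I = {f \<in> alg_carrier Q. f \<in> I}"

text \<open>T tensor_R C is modelled as pairs (x, y) standing for x (x) 1 + y (x) i.\<close>
type_synonym ('v,'a,'d) cplx = "(('v,'a) path \<Rightarrow> 'd) \<times> (('v,'a) path \<Rightarrow> 'd)"

definition cmul :: "('v,'a) quiver \<Rightarrow> ('a \<Rightarrow> 'd \<Rightarrow> 'd) \<Rightarrow>
    ('v,'a,'d::{ab_group_add,times}) cplx \<Rightarrow> ('v,'a,'d) cplx \<Rightarrow> ('v,'a,'d) cplx" where
  "cmul Q tw u w = ((\<lambda>r. tmul Q tw (fst u) (fst w) r - tmul Q tw (snd u) (snd w) r),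
                    (\<lambda>r. tmul Q tw (fst u) (snd w) r + tmul Q tw (snd u) (fst w) r))"

definition cadd :: "('v,'a,'d::plus) cplx \<Rightarrow> ('v,'a,'d) cplx \<Rightarrow> ('v,'a,'d) cplx" where
  "cadd u w = (tadd (fst u) (fst w), tadd (snd u) (snd w))"

definition cscale :: "complex \<Rightarrow> ('v,'a,'d::real_vector) cplx \<Rightarrow> ('v,'a,'d) cplx" where
  "cscale c u = ((\<lambda>r. Re c *\<^sub>R fst u r - Im c *\<^sub>R snd u r),
                 (\<lambda>r. Re c *\<^sub>R snd u r + Im c *\<^sub>R fst u r))"

text \<open>The idempotent e = (epsilon_i)_i, where epsilon = er (x) 1 + ei (x) i in D (x)_R C.\<close>
definition e_elt :: "('v,'a) quiver \<Rightarrow> 'd \<times> 'd \<Rightarrow> ('v,'a,'d::zero) cplx" where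
  "e_elt Q eps = ((\<lambda>p. if snd p = [] \<and> fst p \<in> verts Q then fst eps else 0),
                  (\<lambda>p. if snd p = [] \<and> fst p \<in> verts Q then snd eps else 0))"

definition corner :: "('v,'a) quiver \<Rightarrow> ('a \<Rightarrow> 'd \<Rightarrow> 'd) \<Rightarrow> 'd \<times> 'd \<Rightarrow>
    ('v,'a,'d::{ab_group_add,times}) cplx set \<Rightarrow> ('v,'a,'d) cplx set" where
  "corner Q tw eps X = {cmul Q tw (cmul Q tw (e_elt Q eps) z) (e_elt Q eps) | z. z \<in> X}"

definition fiber_of :: "('w \<Rightarrow> 'v) \<Rightarrow> ('b \<Rightarrow> 'a) \<Rightarrow> ('w,'b) quiver \<Rightarrow> ('w,'b) path \<Rightarrow>
    ('v,'a) path \<Rightarrow> bool" where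
  "fiber_of piv pia G q p \<longleftrightarrow> is_path G q \<and> piv (fst q) = fst p \<and> map pia (snd q) = snd p"

text \<open>Complexification isomorphism Psi : e (T tensor C) e \<rightarrow> C Gamma, with
  projection (piv, pia) : Gamma \<rightarrow> Q.\<close>
definition complexif_iso :: "('v,'a) quiver \<Rightarrow> ('a \<Rightarrow> 'd \<Rightarrow> 'd) \<Rightarrow> 'd \<times> 'd \<Rightarrow>
    ('w,'b) quiver \<Rightarrow> ('w \<Rightarrow> 'v) \<Rightarrow> ('b \<Rightarrow> 'a) \<Rightarrow>
    (('v,'a,'d::{real_vector,times}) cplx \<Rightarrow> (('w,'b) path \<Rightarrow> complex)) \<Rightarrow> bool" where
  "complexif_iso Q tw eps G piv pia \<Psi> \<longleftrightarrow>
     (let E = corner Q tw eps (alg_carrier Q \<times> alg_carrier Q) in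
     bij_betw \<Psi> E (alg_carrier G) \<and>
     (\<forall>u\<in>E. \<forall>w\<in>E. \<Psi> (cadd u w) = tadd (\<Psi> u) (\<Psi> w) \<and>
                    \<Psi> (cmul Q tw u w) = tmul G (\<lambda>_. id) (\<Psi> u) (\<Psi> w)) \<and>
     (\<forall>c. \<forall>u\<in>E. \<Psi> (cscale c u) = (\<lambda>r. c * \<Psi> u r)) \<and>
     (\<forall>p. is_path Q p \<longrightarrow>
        \<Psi> ` corner Q tw eps {(delta p a, delta p b) | a b. True} =
        {f \<in> alg_carrier G. \<forall>r. f r \<noteq> 0 \<longrightarrow> fiber_of piv pia G r p}))"

definition J_ideal :: "('v,'a) quiver \<Rightarrow> ('a \<Rightarrow> 'd \<Rightarrow> 'd) \<Rightarrow> 'd \<times> 'd \<Rightarrow>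
    (('v,'a,'d::{ab_group_add,times}) cplx \<Rightarrow> 'g) \<Rightarrow> (('v,'a) path \<Rightarrow> 'd) set \<Rightarrow> 'g set" where
  "J_ideal Q tw eps \<Psi> I = \<Psi> ` corner Q tw eps (I \<times> I)"

text \<open>v-uniform with C: cbar alpha says M(alpha) = conj(C). Vertex (i, False) is i,
  (i, True) is bar i; arrow (alpha, False) is alpha, (alpha, True) is bar alpha.\<close>
definition gammaC :: "('v,'a) quiver \<Rightarrow> ('a \<Rightarrow> bool) \<Rightarrow> ('v \<times> bool, 'a \<times> bool) quiver" where
  "gammaC Q cbar = \<lparr> verts = verts Q \<times> UNIV, arrs = arrs Q \<times> UNIV,
      src = (\<lambda>(\<alpha>, b). (src Q \<alpha>, b \<noteq> cbar \<alpha>)), tgt = (\<lambda>(\<alpha>, b). (tgt Q \<alpha>, b)) \<rparr>"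

definition twistC :: "('a \<Rightarrow> bool) \<Rightarrow> 'a \<Rightarrow> complex \<Rightarrow> complex" where
  "twistC cbar \<alpha> = (if cbar \<alpha> then cnj else id)"

text \<open>v-uniform with R or H: all bimodules standard, Gamma has the same vertices and arrows.\<close>
definition gammaRH :: "('v,'a) quiver \<Rightarrow> ('v,'a) quiver" where
  "gammaRH Q = Q"

end

theory Submission
  imports Defs
begin

text \<open>
  For a v-uniform modulation over a real division algebra D, each M(p) is D 1_{M(p)}, and the
  idempotent e, being supported on trivial paths, cuts e(M(p) \<otimes> C)e down to pairs (A p, B p).
  By its defining property, \<Psi> maps this corner onto the span of the fibers of p, so every fiber q
  has a preimage (A p, B p) with A or B nonzero. Injectivity of \<Psi> shows that q \<in> J exactly when
  this preimage lies in e(I \<otimes> C)e \<subseteq> I \<times> I, and since D is a division ring an ideal containing one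
  nonzero multiple of p contains all of them. So q \<in> J iff p \<in> R_I, for every fiber q. It remains
  to count fibers: \<Gamma> = Q for R and H, while for C a path of \<Gamma> is determined by the sheet
  of its starting vertex, giving exactly two lifts.
\<close>

lemma quat_scaleR_mult: "r *\<^sub>R x * y = r *\<^sub>R (x * y :: quat)"
  and quat_mult_scaleR: "x * r *\<^sub>R y = r *\<^sub>R (x * y :: quat)"
  by (simp_all add: quat_eq_iff times_quat_def scaleR_quat_def algebra_simps)

instantiation quat :: real_div_algebra
begin

definition inverse_quat :: "quat \<Rightarrow> quat" where
  "inverse x = inverse ((cmod (qa x))\<^sup>2 + (cmod (qb x))\<^sup>2) *\<^sub>R Quat (cnj (qa x)) (- qb x)"

definition divide_quat :: "quat \<Rightarrow> quat \<Rightarrow> quat" where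
  "divide_quat x y = x * inverse y"

instance
proof
  fix x y z :: quat and r :: real
  show "x * y * z = x * (y * z)" "(x + y) * z = x * z + y * z" "x * (y + z) = x * y + x * z"
    "1 * x = x" "x * 1 = x"
    by (simp_all add: quat_eq_iff times_quat_def plus_quat_def one_quat_def algebra_simps)
  show "r *\<^sub>R x * y = r *\<^sub>R (x * y)" "x * r *\<^sub>R y = r *\<^sub>R (x * y)"
    by (rule quat_scaleR_mult quat_mult_scaleR)+
  show "(0::quat) \<noteq> 1" by (simp add: zero_quat_def one_quat_def)
  show "inverse (0::quat) = 0" by (simp add: inverse_quat_def zero_quat_def scaleR_quat_def)
  assume "x \<noteq> 0"
  obtain a b where x: "x = Quat a b" by (cases x)
  define n where "n = (cmod a)\<^sup>2 + (cmod b)\<^sup>2"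
  have "n \<noteq> 0" using \<open>x \<noteq> 0\<close> by (simp add: n_def x zero_quat_def sum_power2_eq_zero_iff)
  have "complex_of_real n = a * cnj a + b * cnj b"
    unfolding n_def of_real_add complex_norm_square ..
  then have "Quat (cnj a) (- b) * x = Quat (of_real n) 0" "x * Quat (cnj a) (- b) = Quat (of_real n) 0"
    by (simp_all add: x times_quat_def mult.commute)
  moreover have "inverse x = inverse n *\<^sub>R Quat (cnj a) (- b)"
    by (simp add: inverse_quat_def x n_def)
  moreover have "inverse n *\<^sub>R Quat (of_real n) 0 = 1"
    using \<open>n \<noteq> 0\<close> by (simp add: scaleR_quat_def one_quat_def scaleR_conv_of_real)
  ultimately show "inverse x * x = 1" "x * inverse x = 1"
    by (simp_all only: quat_scaleR_mult quat_mult_scaleR)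
qed (rule divide_quat_def)

end

definition tscalar :: "('v,'a) quiver \<Rightarrow> 'd::zero \<Rightarrow> ('v,'a) path \<Rightarrow> 'd" where
  "tscalar Q s = (\<lambda>p. if snd p = [] \<and> fst p \<in> verts Q then s else 0)"

lemma e_elt_tscalar: "e_elt Q eps = (tscalar Q (fst eps), tscalar Q (snd eps))"
  by (simp add: e_elt_def tscalar_def)

lemma supp_tscalar: "supp (tscalar Q s) = (if s = 0 then {} else (\<lambda>v. (v, [])) ` verts Q)"
  by (auto simp: supp_def tscalar_def)

lemma tscalar_carrier: "finite (verts Q) \<Longrightarrow> tscalar Q s \<in> alg_carrier Q"
  unfolding alg_carrier_def by (simp add: supp_tscalar) (simp add: tscalar_def is_path_def)

lemma supp_delta: "supp (delta p d) \<subseteq> {p}"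
  by (auto simp: supp_def delta_def)

lemma delta_carrier: "is_path Q p \<Longrightarrow> delta p d \<in> alg_carrier Q"
  using supp_delta[of p d] by (auto simp: alg_carrier_def delta_def intro: finite_subset)

lemma eq_delta_if_supp_subset: "supp f \<subseteq> {p} \<Longrightarrow> f = delta p (f p)"
  by (auto simp: supp_def delta_def fun_eq_iff)

lemma supp_add_subset:
  "supp f \<subseteq> S \<Longrightarrow> supp g \<subseteq> S \<Longrightarrow> supp (\<lambda>r. f r + g r :: 'd::monoid_add) \<subseteq> S"
  unfolding supp_def subset_iff mem_Collect_eq by (metis add.right_neutral)

lemma supp_diff_subset:
  "supp f \<subseteq> S \<Longrightarrow> supp g \<subseteq> S \<Longrightarrow> supp (\<lambda>r. f r - g r :: 'd::group_add) \<subseteq> S"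
  unfolding supp_def subset_iff mem_Collect_eq by (metis diff_self)

lemma supp_tmul:
  "supp (tmul Q tw f g) \<subseteq> {pcomp q p | q p. q \<in> supp f \<and> p \<in> supp g \<and> ptgt Q p = psrc q}"
proof
  fix r
  define T where "T q p = (if ptgt Q p = psrc q \<and> pcomp q p = r
    then f q * path_twist tw (snd q) (g p) else 0)" for q p
  assume "r \<in> supp (tmul Q tw f g)"
  then have "(\<Sum>q\<in>supp f. \<Sum>p\<in>supp g. T q p) \<noteq> 0"
    by (simp add: supp_def tmul_def T_def)
  then obtain q where q: "q \<in> supp f" and "(\<Sum>p\<in>supp g. T q p) \<noteq> 0"
    by (rule sum.not_neutral_contains_not_neutral)
  then obtain p where "p \<in> supp g" and "T q p \<noteq> 0"
    by (meson sum.not_neutral_contains_not_neutral)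
  then have "ptgt Q p = psrc q" "r = pcomp q p"
    by (simp_all add: T_def split: if_splits)
  with q \<open>p \<in> supp g\<close>
  show "r \<in> {pcomp q p | q p. q \<in> supp f \<and> p \<in> supp g \<and> ptgt Q p = psrc q}"
    by blast
qed

lemma supp_tmul_tscalar_left:
  "supp g \<subseteq> {p} \<Longrightarrow> supp (tmul Q tw (tscalar Q s) g) \<subseteq> {p}"
  using supp_tmul[of Q tw "tscalar Q s" g]
  by (auto simp: supp_tscalar pcomp_def psrc_def ptgt_def split: if_splits)

lemma supp_tmul_tscalar_right:
  "supp f \<subseteq> {p} \<Longrightarrow> supp (tmul Q tw f (tscalar Q s)) \<subseteq> {p}"
  using supp_tmul[of Q tw f "tscalar Q s"]
  by (auto simp: supp_tscalar pcomp_def psrc_def ptgt_def split: if_splits)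

lemma corner_delta_pairs:
  assumes "z \<in> corner Q tw eps {(delta p a, delta p b) | a b. True}"
  shows "\<exists>A B. z = (delta p A, delta p B)"
proof -
  have left: "supp (fst (cmul Q tw (e_elt Q eps) (x, y))) \<subseteq> {p} \<and>
      supp (snd (cmul Q tw (e_elt Q eps) (x, y))) \<subseteq> {p}"
    if "supp x \<subseteq> {p}" "supp y \<subseteq> {p}" for x y
    unfolding cmul_def e_elt_tscalar fst_conv snd_conv
    by (intro conjI supp_add_subset supp_diff_subset supp_tmul_tscalar_left that)
  have right: "supp (fst (cmul Q tw (x, y) (e_elt Q eps))) \<subseteq> {p} \<and>
      supp (snd (cmul Q tw (x, y) (e_elt Q eps))) \<subseteq> {p}"
    if "supp x \<subseteq> {p}" "supp y \<subseteq> {p}" for x y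
    unfolding cmul_def e_elt_tscalar fst_conv snd_conv
    by (intro conjI supp_add_subset supp_diff_subset supp_tmul_tscalar_right that)
  obtain a b where z: "z = cmul Q tw (cmul Q tw (e_elt Q eps) (delta p a, delta p b)) (e_elt Q eps)"
    using assms by (auto simp: corner_def)
  let ?u = "cmul Q tw (e_elt Q eps) (delta p a, delta p b)"
  have "supp (fst ?u) \<subseteq> {p}" "supp (snd ?u) \<subseteq> {p}"
    using left[OF supp_delta supp_delta] by auto
  then have "supp (fst z) \<subseteq> {p}" "supp (snd z) \<subseteq> {p}"
    using right unfolding z by fastforce+
  then show ?thesis
    by (metis eq_delta_if_supp_subset prod.collapse)
qed

lemma is_ideal_add: "is_ideal Q tw I \<Longrightarrow> x \<in> I \<Longrightarrow> y \<in> I \<Longrightarrow> (\<lambda>r. x r + y r) \<in> I"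
  unfolding is_ideal_def tadd_def by blast

lemma is_ideal_diff: "is_ideal Q tw I \<Longrightarrow> x \<in> I \<Longrightarrow> y \<in> I \<Longrightarrow> (\<lambda>r. x r - y r) \<in> I"
  using is_ideal_add[of Q tw I x "\<lambda>r. - y r"] unfolding is_ideal_def by simp

lemma is_ideal_mult_left:
  "is_ideal Q tw I \<Longrightarrow> a \<in> alg_carrier Q \<Longrightarrow> x \<in> I \<Longrightarrow> tmul Q tw a x \<in> I"
  unfolding is_ideal_def by blast

lemma is_ideal_mult_right:
  "is_ideal Q tw I \<Longrightarrow> a \<in> alg_carrier Q \<Longrightarrow> x \<in> I \<Longrightarrow> tmul Q tw x a \<in> I"
  unfolding is_ideal_def by blast

lemma corner_subset_ideal:
  fixes I :: "(('v,'a) path \<Rightarrow> 'd::{ab_group_add,times}) set"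
  assumes "finite (verts Q)" and I: "is_ideal Q tw I"
  shows "corner Q tw eps (I \<times> I) \<subseteq> I \<times> I"
proof -
  have tI: "tscalar Q c \<in> alg_carrier Q" for c :: 'd
    using assms(1) by (rule tscalar_carrier)
  have left: "cmul Q tw (e_elt Q eps) u \<in> I \<times> I" if "u \<in> I \<times> I" for u
    using that unfolding cmul_def e_elt_tscalar mem_Times_iff fst_conv snd_conv
    by (auto intro!: is_ideal_add[OF I] is_ideal_diff[OF I] is_ideal_mult_left[OF I] tI)
  have right: "cmul Q tw u (e_elt Q eps) \<in> I \<times> I" if "u \<in> I \<times> I" for u
    using that unfolding cmul_def e_elt_tscalar mem_Times_iff fst_conv snd_conv
    by (auto intro!: is_ideal_add[OF I] is_ideal_diff[OF I] is_ideal_mult_right[OF I] tI)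
  show ?thesis
    unfolding corner_def using left right by blast
qed

lemma ptgt_in_verts:
  assumes "finite_quiver Q" and p: "is_path Q p"
  shows "ptgt Q p \<in> verts Q"
proof (cases "snd p = []")
  case True
  then show ?thesis using p by (simp add: ptgt_def is_path_def)
next
  case False
  then have "last (snd p) \<in> arrs Q"
    using p last_in_set unfolding is_path_def by blast
  then show ?thesis
    using assms(1) False by (simp add: ptgt_def finite_quiver_def)
qed

lemma tmul_tscalar_delta:
  fixes s d :: "'d::{comm_monoid_add, mult_zero}"
  assumes Q: "finite_quiver Q" and p: "is_path Q p"
  shows "tmul Q tw (tscalar Q s) (delta p d) = delta p (s * d)"
proof (cases "s = 0 \<or> d = 0")
  case True
  moreover have "supp (delta p (0::'d)) = {}"
    by (simp add: supp_def delta_def)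
  ultimately have "supp (tscalar Q s) = {} \<or> supp (delta p d) = {}"
    by (auto simp: supp_tscalar)
  then have "tmul Q tw (tscalar Q s) (delta p d) = (\<lambda>_. 0)"
    by (elim disjE) (simp_all add: tmul_def)
  then show ?thesis
    using True by (auto simp: delta_def)
next
  case False
  have "finite (verts Q)" using Q by (simp add: finite_quiver_def)
  have supp_d: "supp (delta p d) = {p}" using False by (auto simp: supp_def delta_def)
  have inj: "inj_on (\<lambda>v. (v, [])) (verts Q)" by (auto simp: inj_on_def)
  have "tmul Q tw (tscalar Q s) (delta p d) r =
      (\<Sum>v\<in>verts Q. if ptgt Q p = v then delta p (s * d) r else 0)" for r
    using False unfolding tmul_def supp_tscalar supp_d
    by (auto simp: sum.reindex[OF inj] psrc_def pcomp_def intro!: sum.cong)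
      (auto simp: tscalar_def delta_def)
  then show ?thesis
    using \<open>finite (verts Q)\<close> ptgt_in_verts[OF Q p] by (simp add: fun_eq_iff)
qed

lemma delta_mem_ideal_rescale:
  fixes I :: "(('v,'a) path \<Rightarrow> 'd::division_ring) set"
  assumes Q: "finite_quiver Q" and I: "is_ideal Q tw I" and p: "is_path Q p"
    and "delta p d \<in> I" and "d \<noteq> 0"
  shows "delta p c \<in> I"
proof -
  have "tmul Q tw (tscalar Q (c * inverse d)) (delta p d) \<in> I"
    using Q by (intro is_ideal_mult_left[OF I] tscalar_carrier assms) (simp add: finite_quiver_def)
  then show ?thesis
    using \<open>d \<noteq> 0\<close> by (simp add: tmul_tscalar_delta[OF Q p] mult.assoc)
qed

lemma corner_mono: "X \<subseteq> Y \<Longrightarrow> corner Q tw eps X \<subseteq> corner Q tw eps Y"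
  unfolding corner_def by blast

lemma
  assumes "complexif_iso Q tw eps G piv pia \<Psi>"
  shows complexif_iso_inj: "inj_on \<Psi> (corner Q tw eps (alg_carrier Q \<times> alg_carrier Q))"
    and complexif_iso_add: "\<lbrakk>u \<in> corner Q tw eps (alg_carrier Q \<times> alg_carrier Q);
        w \<in> corner Q tw eps (alg_carrier Q \<times> alg_carrier Q)\<rbrakk>
      \<Longrightarrow> \<Psi> (cadd u w) = tadd (\<Psi> u) (\<Psi> w)"
    and complexif_iso_image_path: "is_path Q p \<Longrightarrow>
      \<Psi> ` corner Q tw eps {(delta p a, delta p b) | a b. True} =
      {f \<in> alg_carrier G. \<forall>r. f r \<noteq> 0 \<longrightarrow> fiber_of piv pia G r p}"
proof -
  show "inj_on \<Psi> (corner Q tw eps (alg_carrier Q \<times> alg_carrier Q))"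
    and "\<lbrakk>u \<in> corner Q tw eps (alg_carrier Q \<times> alg_carrier Q);
        w \<in> corner Q tw eps (alg_carrier Q \<times> alg_carrier Q)\<rbrakk>
      \<Longrightarrow> \<Psi> (cadd u w) = tadd (\<Psi> u) (\<Psi> w)"
    using assms unfolding complexif_iso_def Let_def bij_betw_def by simp_all
  show "is_path Q p \<Longrightarrow> \<Psi> ` corner Q tw eps {(delta p a, delta p b) | a b. True} =
      {f \<in> alg_carrier G. \<forall>r. f r \<noteq> 0 \<longrightarrow> fiber_of piv pia G r p}"
    using assms unfolding complexif_iso_def Let_def by blast
qed

lemma complexif_iso_zero:
  fixes \<Psi> :: "('v,'a,'d::{real_vector,times}) cplx \<Rightarrow> ('w,'b) path \<Rightarrow> complex"
  assumes \<Psi>: "complexif_iso Q tw eps G piv pia \<Psi>"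
    and 0: "(\<lambda>_. 0, \<lambda>_. 0) \<in> corner Q tw eps (alg_carrier Q \<times> alg_carrier Q)"
  shows "\<Psi> (\<lambda>_. 0, \<lambda>_. 0) = (\<lambda>_. 0)"
proof
  fix r
  have "cadd (\<lambda>_. 0, \<lambda>_. 0) (\<lambda>_. 0, \<lambda>_. 0) = ((\<lambda>_. 0, \<lambda>_. 0) :: ('v,'a,'d) cplx)"
    by (simp add: cadd_def tadd_def)
  then have "tadd (\<Psi> (\<lambda>_. 0, \<lambda>_. 0)) (\<Psi> (\<lambda>_. 0, \<lambda>_. 0)) = \<Psi> (\<lambda>_. 0, \<lambda>_. 0)"
    using complexif_iso_add[OF \<Psi> 0 0] by simp
  then have "tadd (\<Psi> (\<lambda>_. 0, \<lambda>_. 0)) (\<Psi> (\<lambda>_. 0, \<lambda>_. 0)) r = \<Psi> (\<lambda>_. 0, \<lambda>_. 0) r"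
    by (rule fun_cong)
  then show "\<Psi> (\<lambda>_. 0, \<lambda>_. 0) r = 0"
    by (simp add: tadd_def)
qed

lemma fiber_delta_preimage:
  fixes \<Psi> :: "('v,'a,'d::{real_vector,times}) cplx \<Rightarrow> ('w,'b) path \<Rightarrow> complex"
  assumes \<Psi>: "complexif_iso Q tw eps G piv pia \<Psi>"
    and p: "is_path Q p" and q: "fiber_of piv pia G q p"
  obtains A B where "(delta p A, delta p B) \<in> corner Q tw eps {(delta p a, delta p b) | a b. True}"
    and "\<Psi> (delta p A, delta p B) = delta q 1" and "A \<noteq> 0 \<or> B \<noteq> 0"
proof -
  let ?V = "{(delta p (a :: 'd), delta p (b :: 'd)) | a b. True}"
  have "is_path G q" using q by (simp add: fiber_of_def)
  then have "delta q (1::complex) \<in> alg_carrier G" by (rule delta_carrier)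
  moreover have "\<forall>r. delta q (1::complex) r \<noteq> 0 \<longrightarrow> fiber_of piv pia G r p"
    using q unfolding delta_def by auto
  ultimately have "delta q 1 \<in> \<Psi> ` corner Q tw eps ?V"
    unfolding complexif_iso_image_path[OF \<Psi> p] by blast
  then obtain c where \<Psi>c: "delta q 1 = \<Psi> c" and c: "c \<in> corner Q tw eps ?V"
    by (rule imageE)
  obtain A B where cAB: "c = (delta p A, delta p B)"
    using corner_delta_pairs[OF c] by blast
  have "A \<noteq> 0 \<or> B \<noteq> 0"
  proof (rule ccontr)
    assume "\<not> (A \<noteq> 0 \<or> B \<noteq> 0)"
    then have c0: "c = (\<lambda>_. 0, \<lambda>_. 0)"
      by (simp add: cAB delta_def)
    have "?V \<subseteq> alg_carrier Q \<times> alg_carrier Q"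
      using delta_carrier[OF p] by blast
    then have "c \<in> corner Q tw eps (alg_carrier Q \<times> alg_carrier Q)"
      using c corner_mono by blast
    then have "\<Psi> c = (\<lambda>_. 0)"
      unfolding c0 by (rule complexif_iso_zero[OF \<Psi>])
    then show False
      using fun_cong[OF \<Psi>c, of q] by (simp add: delta_def)
  qed
  then show thesis
    using that c \<Psi>c unfolding cAB by simp
qed

lemma delta_mem_R_ideal_iff_fiber_mem_J_ideal:
  fixes I :: "(('v,'a) path \<Rightarrow> 'd::real_div_algebra) set" and G :: "('w,'b) quiver"
  assumes Q: "finite_quiver Q" and I: "is_ideal Q tw I"
    and \<Psi>: "complexif_iso Q tw eps G piv pia \<Psi>"
    and p: "is_path Q p" and q: "fiber_of piv pia G q p"
  shows "delta p 1 \<in> R_ideal Q I \<longleftrightarrow> delta q 1 \<in> J_ideal Q tw eps \<Psi> I"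
proof -
  let ?C = "corner Q tw eps"
  let ?V = "{(delta p (a :: 'd), delta p (b :: 'd)) | a b. True}"
  obtain A B where c: "(delta p A, delta p B) \<in> ?C ?V"
    and \<Psi>c: "\<Psi> (delta p A, delta p B) = delta q 1" and AB: "A \<noteq> 0 \<or> B \<noteq> 0"
    using fiber_delta_preimage[OF \<Psi> p q] .
  have "delta p 1 \<in> I \<longleftrightarrow> delta q 1 \<in> \<Psi> ` ?C (I \<times> I)"
  proof
    assume "delta p 1 \<in> I"
    then have "?V \<subseteq> I \<times> I"
      using delta_mem_ideal_rescale[OF Q I p] by fastforce
    then have "(delta p A, delta p B) \<in> ?C (I \<times> I)"
      using c corner_mono by blast
    then show "delta q 1 \<in> \<Psi> ` ?C (I \<times> I)"
      unfolding \<Psi>c[symmetric] by (rule imageI)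
  next
    assume "delta q 1 \<in> \<Psi> ` ?C (I \<times> I)"
    then obtain w where \<Psi>w: "delta q 1 = \<Psi> w" and w: "w \<in> ?C (I \<times> I)"
      by (rule imageE)
    have "I \<times> I \<subseteq> alg_carrier Q \<times> alg_carrier Q" and "?V \<subseteq> alg_carrier Q \<times> alg_carrier Q"
      using I delta_carrier[OF p] by (auto simp: is_ideal_def)
    then have "w \<in> ?C (alg_carrier Q \<times> alg_carrier Q)"
      and "(delta p A, delta p B) \<in> ?C (alg_carrier Q \<times> alg_carrier Q)"
      using w c corner_mono by blast+
    then have "w = (delta p A, delta p B)"
      using complexif_iso_inj[OF \<Psi>] \<Psi>w \<Psi>c by (simp add: inj_on_eq_iff)
    moreover have "?C (I \<times> I) \<subseteq> I \<times> I"
      using Q I by (simp add: corner_subset_ideal finite_quiver_def)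
    ultimately have "delta p A \<in> I" "delta p B \<in> I"
      using w by auto
    then show "delta p 1 \<in> I"
      using AB delta_mem_ideal_rescale[OF Q I p] by blast
  qed
  then show ?thesis
    by (simp add: R_ideal_def J_ideal_def delta_carrier[OF p])
qed

definition wf_quiver :: "('v,'a) quiver \<Rightarrow> bool" where
  "wf_quiver Q \<longleftrightarrow> (\<forall>\<alpha>\<in>arrs Q. src Q \<alpha> \<in> verts Q \<and> tgt Q \<alpha> \<in> verts Q)"

lemma finite_quiver_imp_wf: "finite_quiver Q \<Longrightarrow> wf_quiver Q"
  by (simp add: finite_quiver_def wf_quiver_def)

lemma wf_quiver_gammaC: "wf_quiver Q \<Longrightarrow> wf_quiver (gammaC Q cbar)"
  by (auto simp: wf_quiver_def gammaC_def)

lemma is_path_Nil: "is_path Q (v, []) \<longleftrightarrow> v \<in> verts Q"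
  by (simp add: is_path_def)

lemma is_path_Cons:
  assumes "wf_quiver Q"
  shows "is_path Q (v, \<alpha> # as) \<longleftrightarrow>
    \<alpha> \<in> arrs Q \<and> src Q \<alpha> = v \<and> is_path Q (tgt Q \<alpha>, as)"
proof -
  have "(\<forall>k. Suc k < length (\<alpha> # as) \<longrightarrow> tgt Q ((\<alpha> # as) ! k) = src Q ((\<alpha> # as) ! Suc k))
     \<longleftrightarrow> (as \<noteq> [] \<longrightarrow> tgt Q \<alpha> = src Q (hd as)) \<and>
        (\<forall>k. Suc k < length as \<longrightarrow> tgt Q (as ! k) = src Q (as ! Suc k))"
    by (cases as) (auto simp: All_less_Suc2)
  then show ?thesis
    using assms by (auto simp: is_path_def wf_quiver_def)
qed

text \<open>The arrow (\<alpha>, c) of \<Gamma> starts on sheet c \<noteq> cbar \<alpha> and ends on sheet c, so the sheet of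
  the starting vertex determines the lift of every later arrow.\<close>

fun lift_arrows :: "('a \<Rightarrow> bool) \<Rightarrow> bool \<Rightarrow> 'a list \<Rightarrow> ('a \<times> bool) list" where
  "lift_arrows cbar b [] = []"
| "lift_arrows cbar b (\<alpha> # as) = (\<alpha>, b \<noteq> cbar \<alpha>) # lift_arrows cbar (b \<noteq> cbar \<alpha>) as"

definition lift_path :: "('a \<Rightarrow> bool) \<Rightarrow> bool \<Rightarrow> ('v,'a) path \<Rightarrow> ('v \<times> bool, 'a \<times> bool) path" where
  "lift_path cbar b p = ((fst p, b), lift_arrows cbar b (snd p))"

lemma map_fst_lift_arrows: "map fst (lift_arrows cbar b as) = as"
  by (induction as arbitrary: b) auto

lemma is_path_lift_path:
  assumes "wf_quiver Q"
  shows "is_path Q (v, as) \<Longrightarrow> is_path (gammaC Q cbar) (lift_path cbar b (v, as))"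
proof (induction as arbitrary: v b)
  case Nil
  then show ?case by (simp add: lift_path_def is_path_Nil gammaC_def)
next
  case (Cons \<alpha> as)
  then show ?case
    using assms wf_quiver_gammaC[OF assms]
    by (auto simp: lift_path_def is_path_Cons gammaC_def)
qed

lemma lift_arrows_unique:
  assumes "wf_quiver Q"
  shows "is_path (gammaC Q cbar) (w, bs) \<Longrightarrow> bs = lift_arrows cbar (snd w) (map fst bs)"
proof (induction bs arbitrary: w)
  case Nil
  then show ?case by simp
next
  case (Cons \<beta> bs)
  obtain \<alpha> c where \<beta>: "\<beta> = (\<alpha>, c)" by fastforce
  have "w = (src Q \<alpha>, c \<noteq> cbar \<alpha>)" and "is_path (gammaC Q cbar) ((tgt Q \<alpha>, c), bs)"
    using Cons.prems wf_quiver_gammaC[OF assms] by (auto simp: \<beta> is_path_Cons gammaC_def)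
  moreover have "((c \<noteq> cbar \<alpha>) \<noteq> cbar \<alpha>) = c"
    by auto
  ultimately show ?case
    using Cons.IH[of "(tgt Q \<alpha>, c)"] by (simp add: \<beta>)
qed

lemma fibers_gammaC:
  assumes "wf_quiver Q" and "is_path Q p"
  shows "{q. fiber_of fst fst (gammaC Q cbar) q p} = {lift_path cbar False p, lift_path cbar True p}"
proof -
  have lift: "fiber_of fst fst (gammaC Q cbar) (lift_path cbar b p) p" for b
    using is_path_lift_path[OF assms(1), of "fst p" "snd p"] assms(2)
    by (simp add: fiber_of_def lift_path_def map_fst_lift_arrows)
  have unique: "q = lift_path cbar (snd (fst q)) p" if "fiber_of fst fst (gammaC Q cbar) q p" for q
  proof -
    have "is_path (gammaC Q cbar) (fst q, snd q)" "fst (fst q) = fst p" "map fst (snd q) = snd p"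
      using that unfolding fiber_of_def by simp_all
    then have "snd q = lift_arrows cbar (snd (fst q)) (snd p)"
      using lift_arrows_unique[OF assms(1), of cbar "fst q" "snd q"] by simp
    then show ?thesis
      using \<open>fst (fst q) = fst p\<close> by (simp add: lift_path_def prod_eq_iff)
  qed
  show ?thesis
  proof (intro set_eqI iffI)
    fix q
    assume "q \<in> {q. fiber_of fst fst (gammaC Q cbar) q p}"
    then have "q = lift_path cbar (snd (fst q)) p"
      by (simp add: unique)
    then show "q \<in> {lift_path cbar False p, lift_path cbar True p}"
      by (cases "snd (fst q)") simp_all
  qed (use lift in auto)
qed

lemma fibers_gammaRH: "is_path Q p \<Longrightarrow> {q. fiber_of id id (gammaRH Q) q p} = {p}"
  by (auto simp: fiber_of_def gammaRH_def prod_eq_iff)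

lemma gammaRH_delta_mem_R_ideal_iff:
  fixes I :: "(('v,'a) path \<Rightarrow> 'd::real_div_algebra) set"
  assumes Q: "finite_quiver Q" and I: "is_ideal Q (\<lambda>_. id) I"
    and \<Psi>: "complexif_iso Q (\<lambda>_. id) eps (gammaRH Q) id id \<Psi>" and p: "is_path Q p"
  shows "gammaRH Q = Q \<and> {q. fiber_of id id (gammaRH Q) q p} = {p} \<and>
    (delta p 1 \<in> R_ideal Q I \<longleftrightarrow> delta p 1 \<in> J_ideal Q (\<lambda>_. id) eps \<Psi> I)"
proof -
  have "fiber_of id id (gammaRH Q) p p"
    using p by (simp add: fiber_of_def gammaRH_def)
  then show ?thesis
    using delta_mem_R_ideal_iff_fiber_mem_J_ideal[OF Q I \<Psi> p] fibers_gammaRH[OF p]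
    by (simp add: gammaRH_def)
qed

lemma gammaC_delta_mem_R_ideal_iff:
  fixes I :: "(('v,'a) path \<Rightarrow> complex) set"
  assumes Q: "finite_quiver Q" and I: "is_ideal Q (twistC cbar) I"
    and \<Psi>: "complexif_iso Q (twistC cbar) eps (gammaC Q cbar) fst fst \<Psi>" and p: "is_path Q p"
  shows "\<exists>p' p''. p' \<noteq> p'' \<and> {q. fiber_of fst fst (gammaC Q cbar) q p} = {p', p''} \<and>
    (delta p 1 \<in> R_ideal Q I \<longleftrightarrow> delta p' 1 \<in> J_ideal Q (twistC cbar) eps \<Psi> I) \<and>
    (delta p' 1 \<in> J_ideal Q (twistC cbar) eps \<Psi> I \<longleftrightarrow> delta p'' 1 \<in> J_ideal Q (twistC cbar) eps \<Psi> I)"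
proof (intro exI conjI)
  let ?fibers = "{q. fiber_of fst fst (gammaC Q cbar) q p}"
  show fibers: "?fibers = {lift_path cbar False p, lift_path cbar True p}"
    using finite_quiver_imp_wf[OF Q] p by (rule fibers_gammaC)
  have "delta p 1 \<in> R_ideal Q I \<longleftrightarrow> delta q 1 \<in> J_ideal Q (twistC cbar) eps \<Psi> I"
    if "q \<in> ?fibers" for q
    using delta_mem_R_ideal_iff_fiber_mem_J_ideal[OF Q I \<Psi> p] that by simp
  then show "delta p 1 \<in> R_ideal Q I \<longleftrightarrow> delta (lift_path cbar False p) 1 \<in> J_ideal Q (twistC cbar) eps \<Psi> I"
    and "delta (lift_path cbar False p) 1 \<in> J_ideal Q (twistC cbar) eps \<Psi> I \<longleftrightarrow>
      delta (lift_path cbar True p) 1 \<in> J_ideal Q (twistC cbar) eps \<Psi> I"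
    unfolding fibers by blast+
qed (simp add: lift_path_def)

theorem lemma3p10:
  fixes Q :: "('v,'a) quiver"
  assumes fin: "finite_quiver Q"
  shows
    \<comment> \<open>(1) v-uniform with R\<close>
    "(\<forall>(I :: (('v,'a) path \<Rightarrow> real) set) \<Psi> p.
        admissible Q (\<lambda>_. id) I \<and>
        complexif_iso Q (\<lambda>_. id) (1, 0) (gammaRH Q) id id \<Psi> \<and> is_path Q p \<longrightarrow>
        gammaRH Q = Q \<and> {q. fiber_of id id (gammaRH Q) q p} = {p} \<and>
        (delta p 1 \<in> R_ideal Q I \<longleftrightarrow> delta p 1 \<in> J_ideal Q (\<lambda>_. id) (1, 0) \<Psi> I))
   \<and> \<comment> \<open>(1) v-uniform with H\<close>
     (\<forall>(I :: (('v,'a) path \<Rightarrow> quat) set) \<Psi> p.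
        admissible Q (\<lambda>_. id) I \<and>
        complexif_iso Q (\<lambda>_. id) (scaleR (1/2) 1, scaleR (-1/2) quat_i) (gammaRH Q) id id \<Psi>
        \<and> is_path Q p \<longrightarrow>
        gammaRH Q = Q \<and> {q. fiber_of id id (gammaRH Q) q p} = {p} \<and>
        (delta p 1 \<in> R_ideal Q I \<longleftrightarrow>
         delta p 1 \<in> J_ideal Q (\<lambda>_. id) (scaleR (1/2) 1, scaleR (-1/2) quat_i) \<Psi> I))
   \<and> \<comment> \<open>(2) v-uniform with C\<close>
     (\<forall>cbar (I :: (('v,'a) path \<Rightarrow> complex) set) \<Psi> p.
        admissible Q (twistC cbar) I \<and>
        complexif_iso Q (twistC cbar) (1, 0) (gammaC Q cbar) fst fst \<Psi> \<and> is_path Q p \<longrightarrow>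
        (\<exists>p' p''. p' \<noteq> p'' \<and> {q. fiber_of fst fst (gammaC Q cbar) q p} = {p', p''} \<and>
           (delta p 1 \<in> R_ideal Q I \<longleftrightarrow> delta p' 1 \<in> J_ideal Q (twistC cbar) (1, 0) \<Psi> I) \<and>
           (delta p' 1 \<in> J_ideal Q (twistC cbar) (1, 0) \<Psi> I \<longleftrightarrow>
            delta p'' 1 \<in> J_ideal Q (twistC cbar) (1, 0) \<Psi> I)))"
  unfolding admissible_def
  by (intro conjI; intro allI impI; elim conjE)
    (rule gammaRH_delta_mem_R_ideal_iff[OF fin] gammaC_delta_mem_R_ideal_iff[OF fin]; assumption)+

end
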